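(* Let $\Omega$ be a weighted clone. Then $\mathrm{supp}(\Omega)$ is a clone.
   Context: $D$ is a fixed finite set with $|D|\ge2$. A $k$-ary operation is $f:D^k\to D$; $\mathbf{O}^{(k)}_D$ is the set of $k$-ary operations. Projections: $e^{(k)}_i(x_1,\dots,x_k)=x_i$; $\mathbf{J}_D$ is the set of all projections, $\mathbf{J}_D^{(k)}$ the $k$-ary ones. Superposition of operations: $f[g_1,\dots,g_k](\mathbf{x})=f(g_1(\mathbf{x}),\dots,g_k(\mathbf{x}))$. A clone is a set of operations containing all projections and closed under superposition. A $k$-ary weighting is a function $\omega:\mathbf{O}^{(k)}_D\to\mathbb{R}$ with $\sum_f\omega(f)=0$ and $\omega(f)<0$ only if $f$ is a projection. $\mathrm{supp}(\omega)=\mathbf{J}_D^{(k)}\cup\{f:\omega(f)>0\}$, and for a non-empty set $\Omega$ of weightings, $\mathrm{supp}(\Omega)=\mathbf{J}_D\cup\bigcup_{\omega\in\Omega}\mathrm{supp}(\omega)$. For $\omega:\mathbf{O}^{(k)}_D\to\mathbb{R}$ and $\ell$-ary $g_1,\dots,g_k$, the superposition $\omega[g_1,\dots,g_k]:\mathbf{O}^{(\ell)}_D\to\mathbb{R}$ is $\omega[g_1,\dots,g_k](f')=\sum_{f:f[g_1,\dots,g_k]=f'}\omega(f)$; it is proper if it is a weighting. Topology: $k$-ary weightings lie in $\mathbb{R}^{\mathbf{O}^{(k)}_D}$ (Euclidean topology), with disjoint union topology over $k$. A weighted clone is a non-empty set $\Omega$ of weightings closed under scaling by non-negative reals, addition of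 weightings of equal arity, and proper superposition with operations from $\mathrm{supp}(\Omega)$, and topologically closed. *)

theory Defs
  imports "HOL-Analysis.Analysis"
begin

text \<open>A k-ary operation
  D^k \<rightarrow> D is represented by a function on lists that is only meaningful on
  lists of length k and canonically equals undefined elsewhere. Since such a
  function does not determine its arity, operations carrying their arity are
  pairs (k, f).\<close>

type_synonym 'd op = "'d list \<Rightarrow> 'd"

definition ops :: "nat \<Rightarrow> 'd op set" where
  "ops k = {f. \<forall>xs. length xs \<noteq> k \<longrightarrow> f xs = undefined}"

definition proj :: "nat \<Rightarrow> nat \<Rightarrow> 'd op" where
  "proj k i = (\<lambda>xs. if length xs = k then xs ! i else undefined)"

definition projs :: "nat \<Rightarrow> 'd op set" where
  "projs k = {proj k i | i. i < k}"

definition comp :: "nat \<Rightarrow> 'd op \<Rightarrow> 'd op list \<Rightarrow> 'd op" where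
  "comp l f gs = (\<lambda>xs. if length xs = l then f (map (\<lambda>g. g xs) gs) else undefined)"

definition is_clone :: "(nat \<times> 'd op) set \<Rightarrow> bool" where
  "is_clone C \<longleftrightarrow>
     (\<forall>(k, f) \<in> C. f \<in> ops k) \<and>
     (\<forall>k i. i < k \<longrightarrow> (k, proj k i) \<in> C) \<and>
     (\<forall>(k, f) \<in> C. \<forall>l gs. length gs = k \<longrightarrow> (\<forall>g \<in> set gs. (l, g) \<in> C)
          \<longrightarrow> (l, comp l f gs) \<in> C)"

text \<open>A k-ary function O^(k) \<rightarrow> R is a function in extensional (ops k),
  i.e. an element of PiE (ops k) UNIV.\<close>
definition is_weighting :: "nat \<Rightarrow> ('d op \<Rightarrow> real) \<Rightarrow> bool" where
  "is_weighting k w \<longleftrightarrow>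
     w \<in> extensional (ops k) \<and>
     sum w (ops k) = 0 \<and>
     (\<forall>f \<in> ops k. w f < 0 \<longrightarrow> f \<in> projs k)"

definition wsupp :: "nat \<Rightarrow> ('d op \<Rightarrow> real) \<Rightarrow> 'd op set" where
  "wsupp k w = projs k \<union> {f \<in> ops k. w f > 0}"

definition supp :: "(nat \<times> ('d op \<Rightarrow> real)) set \<Rightarrow> (nat \<times> 'd op) set" where
  "supp \<Omega> = {(k, f) | k f. f \<in> projs k} \<union>
             {(k, f) | k w f. (k, w) \<in> \<Omega> \<and> f \<in> wsupp k w}"

definition wcomp :: "nat \<Rightarrow> ('d op \<Rightarrow> real) \<Rightarrow> nat \<Rightarrow> 'd op list \<Rightarrow> ('d op \<Rightarrow> real)" where
  "wcomp k w l gs = restrict (\<lambda>f'. \<Sum>f \<in> {f \<in> ops k. comp l f gs = f'}. w f) (ops l)"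

definition weighted_clone :: "(nat \<times> ('d op \<Rightarrow> real)) set \<Rightarrow> bool" where
  "weighted_clone \<Omega> \<longleftrightarrow>
     \<Omega> \<noteq> {} \<and>
     (\<forall>(k, w) \<in> \<Omega>. is_weighting k w) \<and>
     (\<forall>(k, w) \<in> \<Omega>. \<forall>c::real. c \<ge> 0 \<longrightarrow> (k, restrict (\<lambda>f. c * w f) (ops k)) \<in> \<Omega>) \<and>
     (\<forall>k w1 w2. (k, w1) \<in> \<Omega> \<longrightarrow> (k, w2) \<in> \<Omega> \<longrightarrow>
          (k, restrict (\<lambda>f. w1 f + w2 f) (ops k)) \<in> \<Omega>) \<and>
     (\<forall>(k, w) \<in> \<Omega>. \<forall>l gs. length gs = k \<longrightarrow> (\<forall>g \<in> set gs. (l, g) \<in> supp \<Omega>) \<longrightarrow>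
          is_weighting l (wcomp k w l gs) \<longrightarrow> (l, wcomp k w l gs) \<in> \<Omega>) \<and>
     (\<forall>k. closedin (powertop_real (ops k)) {w. (k, w) \<in> \<Omega>})"

end

theory Submission
  imports Defs
begin

text \<open>Superposing a weighting \<omega> \<in> \<Omega> with operations g_1, ..., g_k from supp(\<Omega>) can
  only fail to be proper because the negative weight of a projection e_i is moved onto g_i,
  which need not be a projection. This is repaired by adding a weighting \<nu> \<in> \<Omega> that is
  large on the non-projection g_i; it exists because supp(\<Omega>) consists of operations of
  positive weight and \<Omega> is a convex cone. The sum \<omega>[g_1, ..., g_k] + \<nu> lies in \<Omega>, being the
  proper superposition of the (k+l)-ary weighting \<omega>[e_1, ..., e_k] + \<nu>[e_{k+1}, ..., e_{k+l}]
  with (g_1, ..., g_k, e_1, ..., e_l). As \<nu> is non-negative off the projections, the weight of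
  f[g_1, ..., g_k] in this sum is positive whenever \<omega>(f) > 0.\<close>

lemma finite_ops: "finite (ops k :: 'd::finite op set)"
proof -
  let ?L = "{xs::'d list. length xs = k}"
  have "inj_on (\<lambda>f. restrict f ?L) (ops k :: 'd op set)"
  proof (rule inj_onI)
    fix f g :: "'d op"
    assume f: "f \<in> ops k" and g: "g \<in> ops k" and eq: "restrict f ?L = restrict g ?L"
    show "f = g"
    proof
      fix xs :: "'d list"
      show "f xs = g xs"
        using fun_cong[OF eq, of xs] f g by (cases "length xs = k") (simp_all add: ops_def)
    qed
  qed
  moreover have "(\<lambda>f. restrict f ?L) ` ops k \<subseteq> PiE ?L (\<lambda>_. UNIV)"
    by (auto split: if_splits)
  moreover have "finite (PiE ?L (\<lambda>_::'d list. UNIV :: 'd set))"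
    using finite_lists_length_eq[of "UNIV :: 'd set" k] by (simp add: finite_PiE)
  ultimately show ?thesis
    by (meson finite_imageD finite_subset)
qed

lemma proj_in_ops: "proj k i \<in> ops k"
  by (simp add: ops_def proj_def)

lemma projs_subset_ops: "projs k \<subseteq> ops k"
  using proj_in_ops by (auto simp: projs_def)

lemma comp_in_ops: "comp l f gs \<in> ops l"
  by (simp add: ops_def comp_def)

lemma comp_proj:
  assumes "i < length gs" "gs ! i \<in> ops l"
  shows "comp l (proj (length gs) i) gs = gs ! i"
  using assms by (auto simp: comp_def proj_def ops_def)

lemma comp_assoc:
  assumes "length hs = N"
  shows "comp l (comp N f gs) hs = comp l f (map (\<lambda>g. comp l g hs) gs)"
  using assms by (auto simp: comp_def o_def)

lemma comp_projs_right:
  assumes "u \<in> ops l"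
  shows "comp l u (map (proj l) [0..<l]) = u"
proof
  fix xs
  show "comp l u (map (proj l) [0..<l]) xs = u xs"
    using assms by (auto simp: comp_def proj_def ops_def intro!: arg_cong[where f = u] nth_equalityI)
qed

lemma is_weighting_nonneg:
  "is_weighting k w \<Longrightarrow> f \<in> ops k \<Longrightarrow> f \<notin> projs k \<Longrightarrow> 0 \<le> w f"
  by (auto simp: is_weighting_def not_le[symmetric])

lemma wcomp_apply:
  "t \<in> ops l \<Longrightarrow> wcomp k w l gs t = (\<Sum>f \<in> {f \<in> ops k. comp l f gs = t}. w f)"
  by (simp add: wcomp_def)

lemma sum_wcomp:
  fixes w :: "'d::finite op \<Rightarrow> real"
  shows "sum (wcomp k w l gs) (ops l) = sum w (ops k)"
proof -
  have "sum (wcomp k w l gs) (ops l) = (\<Sum>t \<in> ops l. \<Sum>f \<in> {f. f \<in> ops k \<and> comp l f gs = t}. w f)"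
    by (rule sum.cong) (auto simp: wcomp_apply)
  also have "\<dots> = sum w (ops k)"
    by (rule sum.group) (auto simp: finite_ops comp_in_ops)
  finally show ?thesis .
qed

text \<open>Negative weight sits on projections e_i, and e_i[g_1, ..., g_k] = g_i.\<close>

lemma wcomp_nonneg_off_args:
  assumes "is_weighting k w" "length gs = k" "set gs \<subseteq> ops l" "t \<notin> set gs"
    and "f \<in> ops k" "comp l f gs = t"
  shows "0 \<le> w f"
proof (rule ccontr)
  assume "\<not> 0 \<le> w f"
  then have "f \<in> projs k"
    using assms(1,5) by (auto simp: is_weighting_def)
  then obtain i where "i < k" "f = proj k i"
    by (auto simp: projs_def)
  moreover have "gs ! i \<in> ops l"
    using \<open>i < k\<close> assms(2,3) by auto
  ultimately have "t = gs ! i"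
    using assms(2,6) comp_proj by metis
  then show False
    using \<open>i < k\<close> assms(2,4) by simp
qed

lemma wcomp_nonneg:
  assumes "is_weighting k w" "length gs = k" "set gs \<subseteq> ops l" "t \<notin> set gs" "t \<in> ops l"
  shows "0 \<le> wcomp k w l gs t"
  using wcomp_nonneg_off_args[OF assms(1-4)] assms(5)
  by (auto simp: wcomp_apply intro: sum_nonneg)

lemma wcomp_ge:
  fixes w :: "'d::finite op \<Rightarrow> real"
  assumes "is_weighting k w" "length gs = k" "set gs \<subseteq> ops l" "comp l f gs \<notin> set gs"
    and "f \<in> ops k"
  shows "w f \<le> wcomp k w l gs (comp l f gs)"
  unfolding wcomp_apply[OF comp_in_ops]
  by (rule member_le_sum)
    (use assms wcomp_nonneg_off_args[OF assms(1-4)] in \<open>auto intro: finite_subset[OF _ finite_ops]\<close>)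

lemma abs_wcomp_le:
  fixes w :: "'d::finite op \<Rightarrow> real"
  assumes "t \<in> ops l"
  shows "\<bar>wcomp k w l gs t\<bar> \<le> (\<Sum>f \<in> ops k. \<bar>w f\<bar>)"
proof -
  have "\<bar>wcomp k w l gs t\<bar> \<le> (\<Sum>f \<in> {f \<in> ops k. comp l f gs = t}. \<bar>w f\<bar>)"
    unfolding wcomp_apply[OF assms] by (rule sum_abs)
  also have "\<dots> \<le> (\<Sum>f \<in> ops k. \<bar>w f\<bar>)"
    by (rule sum_mono2) (auto simp: finite_ops)
  finally show ?thesis .
qed

lemma is_weighting_wcomp_projs:
  fixes w :: "'d::finite op \<Rightarrow> real"
  assumes "is_weighting k w" "length gs = k" "set gs \<subseteq> projs l"
  shows "is_weighting l (wcomp k w l gs)"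
proof -
  have "0 \<le> wcomp k w l gs t" if "t \<in> ops l" "t \<notin> projs l" for t
    using wcomp_nonneg[OF assms(1,2) _ _ that(1)] assms(3) projs_subset_ops that(2) by blast
  moreover have "sum (wcomp k w l gs) (ops l) = 0"
    using assms(1) by (simp add: sum_wcomp is_weighting_def)
  ultimately show ?thesis
    by (auto simp: is_weighting_def wcomp_def not_le[symmetric])
qed

lemma sum_over_fibres:
  assumes "finite A" "finite B" "\<And>x. x \<in> A \<Longrightarrow> \<phi> x \<in> B"
  shows "(\<Sum>y \<in> {y \<in> B. P y}. \<Sum>x \<in> {x \<in> A. \<phi> x = y}. w x) = (\<Sum>x \<in> {x \<in> A. P (\<phi> x)}. w x)"
proof -
  have "(\<Sum>x \<in> {x \<in> A. P (\<phi> x)}. w x)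
      = (\<Sum>y \<in> {y \<in> B. P y}. \<Sum>x \<in> {x. x \<in> {x \<in> A. P (\<phi> x)} \<and> \<phi> x = y}. w x)"
    by (rule sum.group[symmetric]) (use assms in auto)
  also have "\<dots> = (\<Sum>y \<in> {y \<in> B. P y}. \<Sum>x \<in> {x \<in> A. \<phi> x = y}. w x)"
    by (rule sum.cong) (auto intro!: sum.cong)
  finally show ?thesis ..
qed

lemma wcomp_wcomp:
  fixes w :: "'d::finite op \<Rightarrow> real"
  assumes "length hs = N"
  shows "wcomp N (wcomp k w N gs) l hs = wcomp k w l (map (\<lambda>g. comp l g hs) gs)"
proof
  fix t
  show "wcomp N (wcomp k w N gs) l hs t = wcomp k w l (map (\<lambda>g. comp l g hs) gs) t"
  proof (cases "t \<in> ops l")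
    case True
    have "wcomp N (wcomp k w N gs) l hs t
        = (\<Sum>F \<in> {F \<in> ops N. comp l F hs = t}. \<Sum>f \<in> {f \<in> ops k. comp N f gs = F}. w f)"
      unfolding wcomp_apply[OF True] by (rule sum.cong) (auto simp: wcomp_apply)
    also have "\<dots> = (\<Sum>f \<in> {f \<in> ops k. comp l (comp N f gs) hs = t}. w f)"
      by (rule sum_over_fibres) (auto simp: finite_ops comp_in_ops)
    finally show ?thesis
      using True by (simp add: wcomp_apply comp_assoc[OF assms])
  qed (simp add: wcomp_def)
qed

lemma wcomp_add:
  assumes "t \<in> ops l"
  shows "wcomp k (restrict (\<lambda>f. w1 f + w2 f) (ops k)) l gs t = wcomp k w1 l gs t + wcomp k w2 l gs t"
  unfolding wcomp_apply[OF assms] sum.distrib[symmetric] by (rule sum.cong) auto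

lemma wcomp_projs_right:
  fixes w :: "'d op \<Rightarrow> real"
  shows "wcomp l w l (map (proj l) [0..<l]) = restrict w (ops l)"
  unfolding wcomp_def
proof (rule restrict_ext)
  fix t :: "'d op"
  assume "t \<in> ops l"
  then have "{f \<in> ops l. comp l f (map (proj l) [0..<l]) = t} = {t}"
    using comp_projs_right by auto
  then show "(\<Sum>f \<in> {f \<in> ops l. comp l f (map (proj l) [0..<l]) = t}. w f) = w t"
    by simp
qed

lemma weighted_clone_is_weighting:
  "weighted_clone \<Omega> \<Longrightarrow> (k, w) \<in> \<Omega> \<Longrightarrow> is_weighting k w"
  by (auto simp: weighted_clone_def)

lemma weighted_clone_add:
  "weighted_clone \<Omega> \<Longrightarrow> (k, w1) \<in> \<Omega> \<Longrightarrow> (k, w2) \<in> \<Omega>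
    \<Longrightarrow> (k, restrict (\<lambda>f. w1 f + w2 f) (ops k)) \<in> \<Omega>"
  unfolding weighted_clone_def by blast

lemma weighted_clone_add_scaled:
  assumes "weighted_clone \<Omega>" "(k, w1) \<in> \<Omega>" "(k, w2) \<in> \<Omega>" "0 \<le> c"
  shows "(k, restrict (\<lambda>f. w1 f + c * w2 f) (ops k)) \<in> \<Omega>"
proof -
  have "(k, restrict (\<lambda>f. c * w2 f) (ops k)) \<in> \<Omega>"
    using assms unfolding weighted_clone_def by blast
  from weighted_clone_add[OF assms(1,2) this]
  show ?thesis
    by (metis (no_types, lifting) restrict_apply' restrict_ext)
qed

lemma weighted_clone_wcomp:
  "weighted_clone \<Omega> \<Longrightarrow> (k, w) \<in> \<Omega> \<Longrightarrow> length gs = k \<Longrightarrow> (\<And>g. g \<in> set gs \<Longrightarrow> (l, g) \<in> supp \<Omega>)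
    \<Longrightarrow> is_weighting l (wcomp k w l gs) \<Longrightarrow> (l, wcomp k w l gs) \<in> \<Omega>"
  unfolding weighted_clone_def by blast

lemma supp_in_ops: "(k, f) \<in> supp \<Omega> \<Longrightarrow> f \<in> ops k"
  using projs_subset_ops by (auto simp: supp_def wsupp_def)

lemma projs_in_supp: "f \<in> projs k \<Longrightarrow> (k, f) \<in> supp \<Omega>"
  by (auto simp: supp_def)

lemma proj_in_supp: "i < k \<Longrightarrow> (k, proj k i) \<in> supp \<Omega>"
  by (auto simp: supp_def projs_def)

lemma supp_obtains_positive_weighting:
  assumes "(k, f) \<in> supp \<Omega>" "f \<notin> projs k"
  obtains w where "(k, w) \<in> \<Omega>" "0 < w f"
  using assms by (auto simp: supp_def wsupp_def)

lemma weighted_clone_zero: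
  assumes wc: "weighted_clone \<Omega>" and "(k, w) \<in> \<Omega>" "length gs = k"
    and "\<And>g. g \<in> set gs \<Longrightarrow> (l, g) \<in> supp \<Omega>"
  shows "(l, restrict (\<lambda>_. 0) (ops l)) \<in> \<Omega>"
proof -
  let ?zero = "restrict (\<lambda>f. 0 * w f) (ops k)"
  have "(k, ?zero) \<in> \<Omega>"
    using assms(1,2) unfolding weighted_clone_def by blast
  moreover have "wcomp k ?zero l gs = restrict (\<lambda>_. 0) (ops l)"
    unfolding wcomp_def by (intro restrict_ext sum.neutral) simp
  moreover have "is_weighting l (restrict (\<lambda>_. 0) (ops l))"
    by (simp add: is_weighting_def)
  ultimately show ?thesis
    using weighted_clone_wcomp[OF wc _ assms(3,4)] by metis
qed

lemma weighted_clone_bounded_below_on: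
  assumes wc: "weighted_clone \<Omega>" and "(l, \<nu>0) \<in> \<Omega>" "finite S"
    and "\<And>s. s \<in> S \<Longrightarrow> (l, s) \<in> supp \<Omega> \<and> s \<notin> projs l"
  shows "\<exists>\<nu>. (l, \<nu>) \<in> \<Omega> \<and> (\<forall>s \<in> S. B \<le> \<nu> s)"
  using assms(3,4)
proof (induction S rule: finite_induct)
  case empty
  then show ?case
    using assms(2) by blast
next
  case (insert x F)
  then obtain \<nu>2 where \<nu>2: "(l, \<nu>2) \<in> \<Omega>" "\<forall>s \<in> F. B \<le> \<nu>2 s"
    by blast
  obtain \<nu>1 where \<nu>1: "(l, \<nu>1) \<in> \<Omega>" "0 < \<nu>1 x"
    using insert.prems supp_obtains_positive_weighting by blast
  define c where "c = max 0 B / \<nu>1 x"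
  have "0 \<le> c"
    using \<nu>1(2) by (simp add: c_def)
  let ?\<nu> = "restrict (\<lambda>f. \<nu>2 f + c * \<nu>1 f) (ops l)"
  have "B \<le> ?\<nu> s" if "s \<in> insert x F" for s
  proof -
    have s: "s \<in> ops l" "s \<notin> projs l"
      using insert.prems[OF that] supp_in_ops by auto
    have "0 \<le> \<nu>1 s" "0 \<le> \<nu>2 s"
      using is_weighting_nonneg[OF weighted_clone_is_weighting[OF wc] s] \<nu>1(1) \<nu>2(1) by auto
    moreover have "c * \<nu>1 x = max 0 B"
      using \<nu>1(2) by (simp add: c_def)
    ultimately show ?thesis
      using that s(1) \<nu>2(2) \<open>0 \<le> c\<close> by (auto intro: add_increasing2 add_increasing mult_nonneg_nonneg)
  qed
  then show ?case
    using weighted_clone_add_scaled[OF wc \<nu>2(1) \<nu>1(1) \<open>0 \<le> c\<close>] by blast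
qed

lemma weighted_clone_wcomp_plus:
  fixes \<Omega> :: "(nat \<times> ('d::finite op \<Rightarrow> real)) set"
  assumes wc: "weighted_clone \<Omega>" and \<omega>: "(k, \<omega>) \<in> \<Omega>" and \<nu>: "(l, \<nu>) \<in> \<Omega>"
    and gs: "length gs = k" "\<And>g. g \<in> set gs \<Longrightarrow> (l, g) \<in> supp \<Omega>"
    and weighting: "is_weighting l (restrict (\<lambda>t. wcomp k \<omega> l gs t + \<nu> t) (ops l))"
  shows "(l, restrict (\<lambda>t. wcomp k \<omega> l gs t + \<nu> t) (ops l)) \<in> \<Omega>"
proof -
  define N where "N = k + l"
  define hs where "hs = gs @ map (proj l) [0..<l]"
  have hs_length: "length hs = N"
    by (simp add: hs_def N_def gs(1))
  have hs_supp: "(l, h) \<in> supp \<Omega>" if "h \<in> set hs" for h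
    using that gs(2) proj_in_supp by (auto simp: hs_def)
  have comp_projs_hs: "map (\<lambda>g. comp l g hs) (map (proj N) [i..<j]) = map (nth hs) [i..<j]"
    if "j \<le> N" for i j
  proof -
    have "comp l (proj N x) hs = hs ! x" if "x < N" for x
      using that hs_length comp_proj[of x hs l] hs_supp[OF nth_mem] supp_in_ops by auto
    then show ?thesis
      using \<open>j \<le> N\<close> by auto
  qed
  have hs_front: "map (nth hs) [0..<k] = gs" and hs_back: "map (nth hs) [k..<N] = map (proj l) [0..<l]"
    by (auto simp: hs_def N_def gs(1) nth_append intro: nth_equalityI)
  define W where
    "W = restrict (\<lambda>F. wcomp k \<omega> N (map (proj N) [0..<k]) F + wcomp l \<nu> N (map (proj N) [k..<N]) F) (ops N)"
  have "set (map (proj N) [0..<k]) \<subseteq> projs N" "set (map (proj N) [k..<N]) \<subseteq> projs N"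
    by (auto simp: N_def projs_def)
  then have "(N, wcomp k \<omega> N (map (proj N) [0..<k])) \<in> \<Omega>" "(N, wcomp l \<nu> N (map (proj N) [k..<N])) \<in> \<Omega>"
    by (intro weighted_clone_wcomp[OF wc \<omega>] weighted_clone_wcomp[OF wc \<nu>]
        is_weighting_wcomp_projs[OF weighted_clone_is_weighting[OF wc \<omega>]]
        is_weighting_wcomp_projs[OF weighted_clone_is_weighting[OF wc \<nu>]];
        auto simp: N_def intro: projs_in_supp)+
  then have "(N, W) \<in> \<Omega>"
    unfolding W_def by (rule weighted_clone_add[OF wc])
  moreover have "wcomp N W l hs = restrict (\<lambda>t. wcomp k \<omega> l gs t + \<nu> t) (ops l)"
  proof -
    have "wcomp N W l hs t = wcomp k \<omega> l gs t + \<nu> t" if "t \<in> ops l" for t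
    proof -
      have "wcomp N W l hs t = wcomp N (wcomp k \<omega> N (map (proj N) [0..<k])) l hs t
          + wcomp N (wcomp l \<nu> N (map (proj N) [k..<N])) l hs t"
        unfolding W_def by (rule wcomp_add[OF that])
      also have "\<dots> = wcomp k \<omega> l (map (nth hs) [0..<k]) t + wcomp l \<nu> l (map (nth hs) [k..<N]) t"
        unfolding wcomp_wcomp[OF hs_length] comp_projs_hs[OF order_refl]
          comp_projs_hs[of k, unfolded N_def, OF le_add1, folded N_def] ..
      also have "\<dots> = wcomp k \<omega> l gs t + \<nu> t"
        unfolding hs_front hs_back wcomp_projs_right using that by simp
      finally show ?thesis .
    qed
    then show ?thesis
      by (simp add: wcomp_def cong: restrict_cong)
  qed
  ultimately show ?thesis
    using weighted_clone_wcomp[OF wc _ hs_length hs_supp] weighting by metis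
qed

lemma weighted_clone_positive_at_comp:
  fixes \<Omega> :: "(nat \<times> ('d::finite op \<Rightarrow> real)) set"
  assumes wc: "weighted_clone \<Omega>" and \<omega>: "(k, \<omega>) \<in> \<Omega>" and f: "f \<in> ops k" "0 < \<omega> f"
    and gs: "length gs = k" "\<And>g. g \<in> set gs \<Longrightarrow> (l, g) \<in> supp \<Omega>"
    and not_proj: "comp l f gs \<notin> projs l"
  obtains R where "(l, R) \<in> \<Omega>" "0 < R (comp l f gs)"
proof -
  have \<omega>_weighting: "is_weighting k \<omega>"
    using weighted_clone_is_weighting[OF wc \<omega>] .
  have gs_ops: "set gs \<subseteq> ops l"
    using gs(2) supp_in_ops by blast
  define M where "M = (\<Sum>f \<in> ops k. \<bar>\<omega> f\<bar>)"
  define S where "S = {g \<in> set gs. g \<notin> projs l}"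
  have "\<exists>\<nu>. (l, \<nu>) \<in> \<Omega> \<and> (\<forall>s \<in> S. M + 1 \<le> \<nu> s)"
    by (rule weighted_clone_bounded_below_on[OF wc weighted_clone_zero[OF wc \<omega> gs]])
      (auto simp: S_def gs(2))
  then obtain \<nu> where \<nu>: "(l, \<nu>) \<in> \<Omega>" "\<forall>s \<in> S. M + 1 \<le> \<nu> s"
    by blast
  have \<nu>_weighting: "is_weighting l \<nu>"
    using weighted_clone_is_weighting[OF wc \<nu>(1)] .
  define R where "R = restrict (\<lambda>t. wcomp k \<omega> l gs t + \<nu> t) (ops l)"
  have R_pos_on_args: "0 < R t" if "t \<in> ops l" "t \<notin> projs l" "t \<in> set gs" for t
    using abs_wcomp_le[OF that(1), of k \<omega> gs] \<nu>(2) that by (auto simp: R_def S_def M_def)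
  have R_nonneg: "0 \<le> R t" if "t \<in> ops l" "t \<notin> projs l" for t
  proof (cases "t \<in> set gs")
    case True
    then show ?thesis using R_pos_on_args[OF that True] by simp
  next
    case False
    then show ?thesis
      using wcomp_nonneg[OF \<omega>_weighting gs(1) gs_ops False that(1)]
        is_weighting_nonneg[OF \<nu>_weighting that] that(1)
      by (simp add: R_def)
  qed
  have "sum R (ops l) = sum (wcomp k \<omega> l gs) (ops l) + sum \<nu> (ops l)"
    unfolding R_def sum.distrib[symmetric] by (rule sum.cong) auto
  then have "sum R (ops l) = 0"
    using \<omega>_weighting \<nu>_weighting by (simp add: sum_wcomp is_weighting_def)
  with R_nonneg have "is_weighting l R"
    by (auto simp: is_weighting_def R_def not_le[symmetric])
  then have "(l, R) \<in> \<Omega>"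
    using weighted_clone_wcomp_plus[OF wc \<omega> \<nu>(1) gs] by (simp add: R_def)
  moreover have "0 < R (comp l f gs)"
  proof (cases "comp l f gs \<in> set gs")
    case True
    then show ?thesis using R_pos_on_args[OF comp_in_ops not_proj] by simp
  next
    case False
    then show ?thesis
      using wcomp_ge[OF \<omega>_weighting gs(1) gs_ops False f(1)] f(2)
        is_weighting_nonneg[OF \<nu>_weighting comp_in_ops not_proj]
      by (simp add: R_def comp_in_ops)
  qed
  ultimately show ?thesis
    using that by blast
qed

lemma weighted_clone_supp_comp:
  fixes \<Omega> :: "(nat \<times> ('d::finite op \<Rightarrow> real)) set"
  assumes wc: "weighted_clone \<Omega>" and f: "(k, f) \<in> supp \<Omega>"
    and gs: "length gs = k" "\<And>g. g \<in> set gs \<Longrightarrow> (l, g) \<in> supp \<Omega>"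
  shows "(l, comp l f gs) \<in> supp \<Omega>"
proof (cases "f \<in> projs k")
  case True
  then obtain i where "i < k" "f = proj k i"
    by (auto simp: projs_def)
  moreover have "gs ! i \<in> ops l"
    using \<open>i < k\<close> gs(1) supp_in_ops[OF gs(2)[OF nth_mem]] by simp
  ultimately show ?thesis
    using comp_proj gs by (metis nth_mem)
next
  case False
  then obtain \<omega> where \<omega>: "(k, \<omega>) \<in> \<Omega>" "0 < \<omega> f"
    using f supp_obtains_positive_weighting by blast
  show ?thesis
  proof (cases "comp l f gs \<in> projs l")
    case False
    then obtain R where "(l, R) \<in> \<Omega>" "0 < R (comp l f gs)"
      using weighted_clone_positive_at_comp[OF wc \<omega>(1) supp_in_ops[OF f] \<omega>(2) gs] by blast
    then show ?thesis
      by (auto simp: supp_def wsupp_def comp_in_ops)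
  qed (rule projs_in_supp)
qed

theorem lemma4:
  fixes \<Omega> :: "(nat \<times> ('d::finite op \<Rightarrow> real)) set"
  assumes "CARD('d) \<ge> 2"
    and "weighted_clone \<Omega>"
  shows "is_clone (supp \<Omega>)"
  unfolding is_clone_def
proof (intro conjI)
  show "\<forall>(k, f) \<in> supp \<Omega>. f \<in> ops k"
    using supp_in_ops by blast
  show "\<forall>k i. i < k \<longrightarrow> (k, proj k i) \<in> supp \<Omega>"
    using proj_in_supp by blast
  show "\<forall>(k, f) \<in> supp \<Omega>. \<forall>l gs. length gs = k \<longrightarrow> (\<forall>g \<in> set gs. (l, g) \<in> supp \<Omega>)
      \<longrightarrow> (l, comp l f gs) \<in> supp \<Omega>"
    using weighted_clone_supp_comp[OF assms(2)] by blast
qed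

end
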